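(* Let $K$ be a semifield and $P$ a polygon. Let $d_1,\dots,d_m$ be pairwise non-crossing internal diagonals of $P$ dividing $P$ into subpolygons $P_1,\dots,P_{m+1}$, and let $D_i$ be a dissection of $P_i$ for each $i$. Then the disjoint union $D = \{d_1,\dots,d_m\} \cup D_1 \cup \dots \cup D_{m+1}$ is a dissection of $P$. Moreover, let $f_i : \operatorname{diag}(P_i) \to K$ be a weak frieze with respect to $D_i$ for each $i$, and assume that whenever $P_i$ and $P_j$ share a diagonal $d$ (necessarily an edge of both), $f_i(d) = f_j(d)$. Then there is a unique weak frieze $f : \operatorname{diag}(P) \to K$ with respect to $D$ such that $f|_{\operatorname{diag}(P_i)} = f_i$ for each $i$.
   Context: A semifield is a set $K$ with binary operations $+$ and $\cdot$ such that $+$ is associative and commutative, $(K,\cdot)$ is a commutative group, and $\cdot$ distributes over $+$; no subtraction is assumed. A polygon is a finite set $V$ of at least three vertices with a cyclic order (pictured as a convex polygon in the plane). A diagonal is a two-element subset of $V$ (edges $\{\alpha,\alpha^+\}$, $\alpha^+$ the successor, count as diagonals); $\operatorname{diag}(P)$ is the set of diagonals; non-edges are internal diagonals. $\{\alpha,\beta\}$ and $\{\gamma,\delta\}$ cross if $\alpha,\beta,\gamma,\delta$ are four distinct vertices appearing in the cyclic order as $\alpha,\gamma,\beta,\delta$ or $\alpha,\delta,\beta,\gamma$. A subpolygon is a subset of $V$ of at least three vertices with the induced cyclic order; its diagonals are diagonals of $P$. A dissection is a (possibly empty) set of pairwise non-crossing internal diagonals. Write $f(\alpha,\beta):=f(\{\alpha,\beta\})$.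 A map $f:\operatorname{diag}(P)\to K$ is a weak frieze with respect to a dissection $D$ if $f(\alpha,\beta)f(\gamma,\delta) = f(\alpha,\gamma)f(\beta,\delta) + f(\alpha,\delta)f(\beta,\gamma)$ whenever $\{\alpha,\beta\}$, $\{\gamma,\delta\}$ are crossing diagonals with $\{\gamma,\delta\} \in D$. *)

theory Defs
  imports "HOL-Library.FuncSet"
begin

class semifield = ab_semigroup_add + comm_monoid_mult + inverse +
  assumes semifield_left_inverse: "inverse a * a = 1"
  and semifield_distrib: "(a + b) * c = a * c + b * c"

text \<open>A polygon is a finite set V of natural numbers with at least three elements;
  its cyclic order is the one induced by the order on nat (closing up from Max V to Min V).
  Every finite cyclically ordered set is isomorphic to such a set, and subpolygons
  (subsets with the induced cyclic order) are again of this form.\<close>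
definition polygon :: "nat set \<Rightarrow> bool" where
  "polygon V \<longleftrightarrow> finite V \<and> card V \<ge> 3"

definition subpolygon :: "nat set \<Rightarrow> nat set \<Rightarrow> bool" where
  "subpolygon S V \<longleftrightarrow> S \<subseteq> V \<and> card S \<ge> 3"

definition diags :: "nat set \<Rightarrow> nat set set" where
  "diags V = {{a, b} | a b. a \<in> V \<and> b \<in> V \<and> a \<noteq> b}"

text \<open>Edges: {a, a+} with a+ the cyclic successor of a in V, i.e. one of the two
  arcs between a and b contains no vertex of V.\<close>
definition is_edge :: "nat set \<Rightarrow> nat set \<Rightarrow> bool" where
  "is_edge V d \<longleftrightarrow> (\<exists>a b. a \<in> V \<and> b \<in> V \<and> a < b \<and> d = {a, b} \<and>
      ({x \<in> V. a < x \<and> x < b} = {} \<or> {x \<in> V. x < a \<or> b < x} = {}))"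

definition internal_diags :: "nat set \<Rightarrow> nat set set" where
  "internal_diags V = {d \<in> diags V. \<not> is_edge V d}"

text \<open>Two diagonals cross iff their four endpoints are distinct and interleave in the
  cyclic order.\<close>
definition crosses :: "nat set \<Rightarrow> nat set \<Rightarrow> bool" where
  "crosses d e \<longleftrightarrow> (\<exists>a b c x. d = {a, b} \<and> e = {c, x} \<and> a < c \<and> c < b \<and> (x < a \<or> b < x))"

definition dissection :: "nat set \<Rightarrow> nat set set \<Rightarrow> bool" where
  "dissection V D \<longleftrightarrow> D \<subseteq> internal_diags V \<and> (\<forall>d\<in>D. \<forall>e\<in>D. \<not> crosses d e)"

definition weak_frieze :: "nat set \<Rightarrow> nat set set \<Rightarrow> (nat set \<Rightarrow> 'k::semifield) \<Rightarrow> bool" where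
  "weak_frieze V D f \<longleftrightarrow>
     (\<forall>a b c x. a \<in> V \<longrightarrow> b \<in> V \<longrightarrow> c \<in> V \<longrightarrow> x \<in> V \<longrightarrow>
        crosses {a, b} {c, x} \<longrightarrow> {c, x} \<in> D \<longrightarrow>
        f {a, b} * f {c, x} = f {a, c} * f {b, x} + f {a, x} * f {b, c})"

text \<open>The subpolygons into which a set E of pairwise non-crossing internal diagonals
  divides V: subpolygons all of whose edges are edges of V or diagonals in E, and
  containing no diagonal of E in their interior.\<close>
definition cells :: "nat set \<Rightarrow> nat set set \<Rightarrow> nat set set" where
  "cells V E = {S. subpolygon S V \<and> (\<forall>e. is_edge S e \<longrightarrow> is_edge V e \<or> e \<in> E)
                   \<and> (\<forall>e\<in>E. e \<notin> internal_diags S)}"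

end

theory Submission
  imports Defs
begin

(*
  Induction on the number of diagonals of E.  A diagonal {c, x} of E with c < x cuts V into the
  subpolygons V1 (the vertices from c to x) and V2 (the vertices from x around to c), which share
  the edge {c, x}; the cells of E are the cells of the diagonals of E inside V1 together with those
  inside V2.  By induction there are weak friezes f1 on V1 and f2 on V2, and they agree on {c, x}
  because this edge lies in a cell on either side.  Any other diagonal {u, w}, u inside V1 and w
  inside V2, crosses {c, x}, so the exchange relation for {c, x} forces
    f {u, w} * f {c, x} = f1 {u, c} * f2 {w, x} + f1 {u, x} * f2 {w, c},
  and cancellation in the semifield gives uniqueness.  For existence one checks that the function
  glued in this way also satisfies the exchange relation for {u, w} crossing a diagonal {p, q} of
  V1 (or V2): multiplied by f {c, x}, it follows from the relations of {u, w}, {p, w}, {q, w} with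
  {c, x} and of {u, c}, {u, x} with {p, q}.
*)

context semifield begin

subclass comm_semiring
  by unfold_locales (rule semifield_distrib)

lemma semifield_mult_right_cancel:
  assumes "a * c = b * c"
  shows "a = b"
proof -
  have "a = a * (c * inverse c)"
    using semifield_left_inverse[of c] by (simp add: mult.commute)
  also have "\<dots> = b * (c * inverse c)"
    using assms by (simp flip: mult.assoc)
  also have "\<dots> = b"
    using semifield_left_inverse[of c] by (simp add: mult.commute)
  finally show ?thesis .
qed

end

definition ptolemy :: "(nat set \<Rightarrow> 'k::semifield) \<Rightarrow> nat \<Rightarrow> nat \<Rightarrow> nat \<Rightarrow> nat \<Rightarrow> bool" where
  "ptolemy f a b p q \<longleftrightarrow> f {a, b} * f {p, q} = f {a, p} * f {b, q} + f {a, q} * f {b, p}"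

lemma ptolemy_commute_left: "ptolemy f b a p q \<longleftrightarrow> ptolemy f a b p q"
  unfolding ptolemy_def by (simp add: insert_commute ac_simps)

lemma ptolemy_commute_right: "ptolemy f a b q p \<longleftrightarrow> ptolemy f a b p q"
  unfolding ptolemy_def by (simp add: insert_commute add.commute)

lemma ptolemy_doubleton_cong:
  assumes "{p, q} = {p', q'}"
  shows "ptolemy f a b p q \<longleftrightarrow> ptolemy f a b p' q'"
  using assms ptolemy_commute_right by (metis doubleton_eq_iff)

lemma ptolemy_exchange:
  assumes "ptolemy f a c p q" "ptolemy f a x p q" "ptolemy f a b c x"
    and "ptolemy f q b c x" "ptolemy f p b c x"
  shows "ptolemy f a b p q"
proof -
  let ?F = "\<lambda>u v. f {u, v}"
  have q: "?F q b * ?F c x = ?F c q * ?F b x + ?F x q * ?F b c"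
    and p: "?F p b * ?F c x = ?F c p * ?F b x + ?F x p * ?F b c"
    using assms(4,5) unfolding ptolemy_def by (simp_all add: insert_commute)
  have "(?F a b * ?F p q) * ?F c x = ?F p q * (?F a b * ?F c x)"
    by (simp add: ac_simps)
  also have "\<dots> = ?F b x * (?F a c * ?F p q) + ?F b c * (?F a x * ?F p q)"
    using assms(3) unfolding ptolemy_def by (simp add: algebra_simps)
  also have "\<dots> = ?F a p * (?F c q * ?F b x + ?F x q * ?F b c)
      + ?F a q * (?F c p * ?F b x + ?F x p * ?F b c)"
    using assms(1,2) unfolding ptolemy_def by (simp add: algebra_simps)
  also have "\<dots> = (?F a p * ?F b q + ?F a q * ?F b p) * ?F c x"
    unfolding q[symmetric] p[symmetric] by (simp add: algebra_simps insert_commute)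
  finally show ?thesis
    unfolding ptolemy_def by (rule semifield_mult_right_cancel)
qed

lemma ptolemy_exchange_shared:
  assumes "ptolemy f a x c r" "ptolemy f a b c x" "ptolemy f r b c x"
  shows "ptolemy f a b c r"
proof -
  let ?F = "\<lambda>u v. f {u, v}"
  have r: "?F r b * ?F c x = ?F c r * ?F b x + ?F x r * ?F b c"
    using assms(3) unfolding ptolemy_def by (simp add: insert_commute)
  have "(?F a b * ?F c r) * ?F c x = ?F c r * (?F a b * ?F c x)"
    by (simp add: ac_simps)
  also have "\<dots> = ?F a c * ?F c r * ?F b x + ?F b c * (?F a x * ?F c r)"
    using assms(2) unfolding ptolemy_def by (simp add: algebra_simps)
  also have "\<dots> = ?F a c * (?F c r * ?F b x + ?F x r * ?F b c) + ?F a r * ?F b c * ?F c x"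
    using assms(1) unfolding ptolemy_def by (simp add: algebra_simps insert_commute)
  also have "\<dots> = (?F a c * ?F b r + ?F a r * ?F b c) * ?F c x"
    unfolding r[symmetric] by (simp add: algebra_simps insert_commute)
  finally show ?thesis
    unfolding ptolemy_def by (rule semifield_mult_right_cancel)
qed

(* Used with a, p, q on one side of the chord {c, x} and b on the other side. *)
lemma ptolemy_transfer:
  assumes "c \<noteq> x" "p \<noteq> q" "{p, q} \<noteq> {c, x}" "a \<notin> {c, x}"
    and through: "\<And>y. y \<in> {a, p, q} - {c, x} \<Longrightarrow> ptolemy f y b c x"
    and beside: "\<And>y. y \<in> {c, x} - {p, q} \<Longrightarrow> ptolemy f a y p q"
  shows "ptolemy f a b p q"
proof -
  have shared: "ptolemy f a b p q" if st: "{s, t} = {c, x}" and "s \<in> {p, q}" for s t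
  proof -
    obtain r where pq: "{p, q} = {s, r}"
      using \<open>s \<in> {p, q}\<close> by (auto simp: insert_commute)
    have "r \<noteq> s" "t \<noteq> s"
      using pq st assms(1,2) by (auto simp: doubleton_eq_iff)
    moreover have "r \<noteq> t"
      using pq st assms(3) by auto
    ultimately have r: "r \<notin> {c, x}" and t: "t \<notin> {p, q}"
      using pq st by (auto simp: doubleton_eq_iff)
    have "ptolemy f a t s r"
      using beside[of t] t st ptolemy_doubleton_cong[OF pq, of f a t] by auto
    moreover have "ptolemy f a b s t" "ptolemy f r b s t"
      using through[of a] through[of r] assms(4) r pq ptolemy_doubleton_cong[OF st] by auto
    ultimately have "ptolemy f a b s r"
      by (rule ptolemy_exchange_shared)
    then show ?thesis
      using ptolemy_doubleton_cong[OF pq, of f a b] by simp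
  qed
  consider "c \<notin> {p, q}" "x \<notin> {p, q}" | "c \<in> {p, q}" | "x \<in> {p, q}"
    by blast
  then show ?thesis
  proof cases
    case 1
    then have "ptolemy f a c p q" "ptolemy f a x p q"
      by (simp_all add: beside)
    moreover have "ptolemy f a b c x" "ptolemy f q b c x" "ptolemy f p b c x"
      using 1 assms(4) by (simp_all add: through)
    ultimately show ?thesis
      by (rule ptolemy_exchange)
  next
    case 2
    then show ?thesis by (rule shared[OF refl])
  next
    case 3
    then show ?thesis by (rule shared[OF insert_commute])
  qed
qed

lemma crosses_iff:
  "crosses {a, b} {p, q} \<longleftrightarrow>
    (a < p \<and> p < b \<and> (q < a \<or> b < q)) \<or> (a < q \<and> q < b \<and> (p < a \<or> b < p)) \<or>
    (b < p \<and> p < a \<and> (q < b \<or> a < q)) \<or> (b < q \<and> q < a \<and> (p < b \<or> a < p))"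
  unfolding crosses_def doubleton_eq_iff by blast

lemma crosses_sym:
  assumes "crosses d e"
  shows "crosses e d"
proof -
  obtain a b p q where "d = {a, b}" "e = {p, q}" "crosses {a, b} {p, q}"
    using assms unfolding crosses_def by blast
  moreover from this(3) have "crosses {p, q} {a, b}"
    unfolding crosses_iff by auto
  ultimately show ?thesis by simp
qed

lemma crosses_distinct:
  "crosses {a, b} {p, q} \<Longrightarrow> a \<noteq> b \<and> a \<noteq> p \<and> a \<noteq> q \<and> b \<noteq> p \<and> b \<noteq> q \<and> p \<noteq> q"
  unfolding crosses_iff by auto

lemma mem_diags: "d \<in> diags V \<longleftrightarrow> (\<exists>a b. a < b \<and> a \<in> V \<and> b \<in> V \<and> d = {a, b})"
  unfolding diags_def by (auto, metis insert_commute linorder_neqE_nat)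

lemma diags_subset: "d \<in> diags V \<Longrightarrow> d \<subseteq> V"
  unfolding diags_def by auto

lemma doubleton_mem_diags: "a \<noteq> b \<Longrightarrow> {a, b} \<in> diags V \<longleftrightarrow> a \<in> V \<and> b \<in> V"
  using diags_subset[of "{a, b}" V] unfolding diags_def by auto

lemma diags_mono: "S \<subseteq> V \<Longrightarrow> diags S \<subseteq> diags V"
  unfolding diags_def by blast

lemma internal_diags_subset: "internal_diags V \<subseteq> diags V"
  unfolding internal_diags_def by blast

lemma is_edge_iff:
  assumes "a < b"
  shows "is_edge V {a, b} \<longleftrightarrow> a \<in> V \<and> b \<in> V \<and>
     ({y \<in> V. a < y \<and> y < b} = {} \<or> {y \<in> V. y < a \<or> b < y} = {})"
proof
  assume "is_edge V {a, b}"
  then obtain a' b' where h: "a' \<in> V" "b' \<in> V" "a' < b'" "{a, b} = {a', b'}"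
    "{y \<in> V. a' < y \<and> y < b'} = {} \<or> {y \<in> V. y < a' \<or> b' < y} = {}"
    unfolding is_edge_def by blast
  moreover have "a' = a" "b' = b"
    using h(3,4) assms by (auto simp: doubleton_eq_iff)
  ultimately show "a \<in> V \<and> b \<in> V \<and>
     ({y \<in> V. a < y \<and> y < b} = {} \<or> {y \<in> V. y < a \<or> b < y} = {})"
    by simp
qed (use assms in \<open>auto simp: is_edge_def\<close>)

lemma is_edge_diags: "is_edge V g \<Longrightarrow> g \<in> diags V"
  unfolding is_edge_def mem_diags by blast

lemma is_edge_subpolygon:
  assumes "S \<subseteq> V" "is_edge V d" "d \<subseteq> S"
  shows "is_edge S d"
proof -
  obtain a b where "a < b" "d = {a, b}"
    using assms(2) unfolding is_edge_def by blast
  with assms show ?thesis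
    unfolding \<open>d = {a, b}\<close> is_edge_iff[OF \<open>a < b\<close>] by auto
qed

lemma internal_diags_mono:
  assumes "S \<subseteq> V"
  shows "internal_diags S \<subseteq> internal_diags V"
proof
  fix d
  assume d: "d \<in> internal_diags S"
  then have "d \<subseteq> S" "d \<in> diags V"
    using assms diags_mono diags_subset unfolding internal_diags_def by blast+
  then show "d \<in> internal_diags V"
    using d assms is_edge_subpolygon unfolding internal_diags_def by blast
qed

lemma edge_not_crosses:
  assumes "is_edge V g" "p \<in> V" "q \<in> V"
  shows "\<not> crosses g {p, q}"
proof -
  obtain a b where ab: "a < b" "g = {a, b}"
    using assms(1) unfolding is_edge_def by blast
  have "(\<forall>y\<in>V. \<not> (a < y \<and> y < b)) \<or> (\<forall>y\<in>V. \<not> (y < a \<or> b < y))"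
    using assms(1) unfolding ab is_edge_iff[OF ab(1)] by auto
  then show ?thesis
    using assms ab unfolding ab crosses_iff by auto
qed

lemma obtain_consecutive:
  fixes S :: "nat set"
  assumes "finite S" "s \<in> S" "s' \<in> S" "s \<le> z" "z < s'"
  obtains t t' where "t \<in> S" "t' \<in> S" "s \<le> t" "t \<le> z" "z < t'" "t' \<le> s'"
    "{y \<in> S. t < y \<and> y < t'} = {}"
proof -
  let ?L = "{y \<in> S. y \<le> z}" and ?R = "{y \<in> S. z < y}"
  have L: "Max ?L \<in> ?L" "\<And>y. y \<in> ?L \<Longrightarrow> y \<le> Max ?L"
    by (rule Max_in) (use assms in auto)
  have R: "Min ?R \<in> ?R" "\<And>y. y \<in> ?R \<Longrightarrow> Min ?R \<le> y"
    by (rule Min_in) (use assms in auto)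
  have "\<not> (Max ?L < y \<and> y < Min ?R)" if "y \<in> S" for y
  proof (cases "y \<le> z")
    case True
    with that L(2) have "y \<le> Max ?L" by blast
    then show ?thesis by simp
  next
    case False
    with that R(2) have "Min ?R \<le> y" by (simp add: not_le)
    then show ?thesis by simp
  qed
  then have "{y \<in> S. Max ?L < y \<and> y < Min ?R} = {}"
    by blast
  moreover have "s \<le> Max ?L" "Min ?R \<le> s'"
    using assms L(2) R(2) by auto
  ultimately show ?thesis
    using L(1) R(1) that by auto
qed

lemma is_edge_Min_Max:
  assumes "finite S" "a \<in> S" "b \<in> S" "a < b"
  shows "is_edge S {Min S, Max S}"
proof -
  have S: "Min S \<in> S" "Max S \<in> S" "\<And>y. y \<in> S \<Longrightarrow> Min S \<le> y \<and> y \<le> Max S"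
    using assms by (auto intro!: Min_in Max_in)
  then have "Min S < Max S"
    using assms by (meson le_less_trans less_le_trans)
  then show ?thesis
    unfolding is_edge_iff[OF \<open>Min S < Max S\<close>] using S by force
qed

lemma exists_third_vertex:
  assumes "finite S" "card S \<ge> 3"
  obtains t where "t \<in> S" "t \<noteq> u" "t \<noteq> w"
proof -
  have "card {u, w} \<le> 2"
    by (simp add: card_insert_if)
  then have "\<not> S \<subseteq> {u, w}"
    using assms card_mono[of "{u, w}" S] by auto
  then show ?thesis
    using that by blast
qed

lemma is_edge_consecutive:
  assumes "t \<in> S" "t' \<in> S" "t < t'" "{y \<in> S. t < y \<and> y < t'} = {}"
  shows "is_edge S {t, t'}"
  using assms by (simp add: is_edge_iff)

lemma proper_subpolygon_has_new_edge:
  assumes "finite V" "S \<subseteq> V" "card S \<ge> 3" "v \<in> V" "v \<notin> S"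
  obtains g where "is_edge S g" "\<not> is_edge V g"
proof -
  have S: "finite S"
    using assms finite_subset by blast
  show ?thesis
  proof (cases "(\<exists>s\<in>S. s < v) \<and> (\<exists>s\<in>S. v < s)")
    case True
    then obtain s s' where "s \<in> S" "s' \<in> S" "s < v" "v < s'"
      by blast
    then obtain t t' where t: "t \<in> S" "t' \<in> S" "t \<le> v" "v < t'"
      and gap: "{y \<in> S. t < y \<and> y < t'} = {}"
      using obtain_consecutive[OF S, of s s' v] less_imp_le by metis
    have "t < v" "t < t'"
      using t assms(5) by (auto simp: le_less)
    obtain y where y: "y \<in> S" "y \<noteq> t" "y \<noteq> t'"
      using exists_third_vertex[OF S assms(3)] by blast
    have "\<not> (t < y \<and> y < t')"
      using y(1) gap by blast
    then have "y < t \<or> t' < y"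
      using y(2,3) by linarith
    then have "\<not> is_edge V {t, t'}"
      unfolding is_edge_iff[OF \<open>t < t'\<close>] using y assms(2,4) \<open>t < v\<close> t by blast
    moreover have "is_edge S {t, t'}"
      using is_edge_consecutive t gap \<open>t < t'\<close> by blast
    ultimately show ?thesis
      using that by blast
  next
    case False
    obtain y where y: "y \<in> S" "y \<noteq> Min S" "y \<noteq> Max S"
      using exists_third_vertex[OF S assms(3)] by blast
    have y': "Min S < y" "y < Max S"
      using y S by (simp_all add: order.not_eq_order_implies_strict)
    have "\<forall>s\<in>S. v < s \<or> s < v"
      using assms(5) by (metis linorder_neqE_nat)
    then have "v < Min S \<or> Max S < v"
      using False S y(1) by (metis Max_in Min_in empty_iff)
    then have "\<not> is_edge V {Min S, Max S}"
      unfolding is_edge_iff[OF less_trans[OF y']] using y y' assms(2,4) by blast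
    moreover have "is_edge S {Min S, Max S}"
      using is_edge_Min_Max[OF S y(1) Max_in[OF S] y'(2)] y(1) by blast
    ultimately show ?thesis
      using that by blast
  qed
qed

lemma cells_no_diagonal:
  assumes "polygon V"
  shows "cells V {} = {V}"
proof -
  have "S = V" if "S \<in> cells V {}" for S
  proof (rule ccontr)
    assume "S \<noteq> V"
    moreover have "S \<subseteq> V" "card S \<ge> 3" "\<And>g. is_edge S g \<Longrightarrow> is_edge V g"
      using that unfolding cells_def subpolygon_def by auto
    ultimately show False
      using assms proper_subpolygon_has_new_edge[of V S] unfolding polygon_def by blast
  qed
  moreover have "V \<in> cells V {}"
    using assms unfolding cells_def subpolygon_def polygon_def by auto
  ultimately show ?thesis
    by blast
qed

lemma edge_crosses_chord_if_lower_missing: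
  fixes S :: "nat set"
  assumes S: "finite S" and u: "u \<in> S" "c < u" "u < x" and w: "w \<in> S" "w < c \<or> x < w"
    and "c \<notin> S"
  obtains g where "is_edge S g" "crosses g {c, x}"
proof (cases "\<exists>s\<in>S. s < c")
  case True
  then obtain s where "s \<in> S" "s < c"
    by blast
  then obtain t t' where "t \<in> S" "t' \<in> S" "t \<le> c" "c < t'" "t' \<le> u"
    and "{y \<in> S. t < y \<and> y < t'} = {}"
    using obtain_consecutive[OF S \<open>s \<in> S\<close> u(1) less_imp_le u(2)] by metis
  moreover have "t < c"
    using \<open>t \<in> S\<close> \<open>t \<le> c\<close> \<open>c \<notin> S\<close> by (auto simp: le_less)
  ultimately show ?thesis
    using that[of "{t, t'}"] is_edge_consecutive u(3) unfolding crosses_iff by auto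
next
  case False
  have Min_Max: "Min S \<in> S" "Max S \<in> S" "Min S \<le> u" "Min S \<le> w" "w \<le> Max S"
    using S u(1) w(1) by (auto intro: Min_in Max_in)
  with False have "c < Min S" "x < Max S"
    using \<open>c \<notin> S\<close> w by (auto simp: not_less le_less)
  then show ?thesis
    using that[of "{Min S, Max S}"] is_edge_Min_Max[OF S u(1) w(1)] Min_Max u w(2)
    unfolding crosses_iff by auto
qed

lemma edge_crosses_chord_if_upper_missing:
  fixes S :: "nat set"
  assumes S: "finite S" and u: "u \<in> S" "c < u" "u < x" and w: "w \<in> S" "w < c \<or> x < w"
    and "x \<notin> S"
  obtains g where "is_edge S g" "crosses g {c, x}"
proof (cases "\<exists>s\<in>S. x < s")
  case True
  then obtain s where "s \<in> S" "x < s"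
    by blast
  then obtain t t' where "t \<in> S" "t' \<in> S" "u \<le> t" "t \<le> x" "x < t'"
    and "{y \<in> S. t < y \<and> y < t'} = {}"
    using obtain_consecutive[OF S u(1) \<open>s \<in> S\<close> less_imp_le[OF u(3)]] by metis
  moreover have "t < x"
    using \<open>t \<in> S\<close> \<open>t \<le> x\<close> \<open>x \<notin> S\<close> by (auto simp: le_less)
  ultimately show ?thesis
    using that[of "{t, t'}"] is_edge_consecutive u(2) unfolding crosses_iff by auto
next
  case False
  have Min_Max: "Min S \<in> S" "Max S \<in> S" "Min S \<le> w" "w \<le> Max S" "u \<le> Max S"
    using S u(1) w(1) by (auto intro: Min_in Max_in)
  with False have "Max S < x" "Min S < c"
    using \<open>x \<notin> S\<close> w by (auto simp: not_less le_less)
  then show ?thesis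
    using that[of "{Min S, Max S}"] is_edge_Min_Max[OF S w(1) u(1)] Min_Max u w(2)
    unfolding crosses_iff by auto
qed

lemma cell_not_across_diagonal:
  assumes "polygon V" "dissection V E" "S \<in> cells V E" "{c, x} \<in> E" "c < x"
    and u: "u \<in> S" "c < u" "u < x" and w: "w \<in> S" "w < c \<or> x < w"
  shows False
proof -
  have SV: "S \<subseteq> V" and S_edges: "\<And>g. is_edge S g \<Longrightarrow> is_edge V g \<or> g \<in> E"
    and S_int: "\<And>e. e \<in> E \<Longrightarrow> e \<notin> internal_diags S"
    using assms(3) unfolding cells_def subpolygon_def by auto
  have cx: "{c, x} \<in> internal_diags V" "\<And>e. e \<in> E \<Longrightarrow> \<not> crosses e {c, x}"
    using assms(2,4) unfolding dissection_def by auto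
  then have "c \<in> V" "x \<in> V"
    using doubleton_mem_diags[of c x V] assms(5) unfolding internal_diags_def by auto
  show False
  proof (cases "c \<in> S \<and> x \<in> S")
    case True
    then have "{c, x} \<in> diags S"
      using assms(5) doubleton_mem_diags by simp
    moreover have "\<not> is_edge S {c, x}"
      unfolding is_edge_iff[OF assms(5)] using u w by blast
    ultimately have "{c, x} \<in> internal_diags S"
      unfolding internal_diags_def by blast
    then show False
      using S_int assms(4) by blast
  next
    case False
    moreover have "finite S"
      using assms(1) SV finite_subset unfolding polygon_def by blast
    ultimately obtain g where "is_edge S g" "crosses g {c, x}"
      using edge_crosses_chord_if_lower_missing[OF _ u w]
        edge_crosses_chord_if_upper_missing[OF _ u w] by blast
    then show False
      using S_edges cx(2) edge_not_crosses \<open>c \<in> V\<close> \<open>x \<in> V\<close> by blast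
  qed
qed

lemma cells_restrict:
  assumes "W \<subseteq> V" "S \<in> cells V E" "S \<subseteq> W"
  shows "S \<in> cells W (E \<inter> internal_diags W)"
proof -
  have "is_edge W g \<or> g \<in> E \<inter> internal_diags W" if "is_edge S g" for g
  proof -
    have "g \<subseteq> W" "g \<in> diags W"
      using that assms(3) is_edge_diags diags_mono diags_subset by blast+
    moreover have "is_edge V g \<or> g \<in> E"
      using that assms(2) unfolding cells_def by blast
    ultimately show ?thesis
      using assms(1) is_edge_subpolygon unfolding internal_diags_def by blast
  qed
  with assms show ?thesis
    unfolding cells_def subpolygon_def by blast
qed

lemma cells_restrict_subset:
  assumes "W \<subseteq> V" "\<And>g. is_edge W g \<Longrightarrow> is_edge V g \<or> g \<in> E"
  shows "cells W (E \<inter> internal_diags W) \<subseteq> cells V E"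
proof
  fix S
  assume S: "S \<in> cells W (E \<inter> internal_diags W)"
  then have "S \<subseteq> W"
    unfolding cells_def subpolygon_def by blast
  then have "e \<notin> internal_diags S" if "e \<in> E" for e
    using that S internal_diags_mono[of S W] unfolding cells_def by blast
  with S assms show "S \<in> cells V E"
    unfolding cells_def subpolygon_def by blast
qed

lemma weak_frieze_ptolemy:
  assumes "weak_frieze V D f" "a \<in> V" "b \<in> V" "p \<in> V" "q \<in> V"
    "crosses {a, b} {p, q}" "{p, q} \<in> D"
  shows "ptolemy f a b p q"
  using assms unfolding weak_frieze_def ptolemy_def by blast

lemma weak_frieze_mono:
  assumes "weak_frieze V D f" "W \<subseteq> V" "D' \<subseteq> D"
  shows "weak_frieze W D' f"
  using assms unfolding weak_frieze_def by blast

lemma weak_frieze_cong: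
  assumes "weak_frieze V D f" "\<And>d. d \<in> diags V \<Longrightarrow> g d = f d"
  shows "weak_frieze V D g"
  unfolding weak_frieze_def
proof (intro allI impI)
  fix a b p q
  assume h: "a \<in> V" "b \<in> V" "p \<in> V" "q \<in> V" "crosses {a, b} {p, q}" "{p, q} \<in> D"
  then have "g {u, v} = f {u, v}" if "u \<in> {a, b, p, q}" "v \<in> {a, b, p, q}" "u \<noteq> v" for u v
    using that assms(2) doubleton_mem_diags by auto
  moreover have "a \<noteq> b" "a \<noteq> p" "a \<noteq> q" "b \<noteq> p" "b \<noteq> q" "p \<noteq> q"
    using crosses_distinct[OF h(5)] by auto
  ultimately show "g {a, b} * g {p, q} = g {a, p} * g {b, q} + g {a, q} * g {b, p}"
    using weak_frieze_ptolemy[OF assms(1) h] unfolding ptolemy_def by simp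
qed

definition inner_side :: "nat set \<Rightarrow> nat \<Rightarrow> nat \<Rightarrow> nat set" where
  "inner_side V c x = {v \<in> V. c \<le> v \<and> v \<le> x}"

definition outer_side :: "nat set \<Rightarrow> nat \<Rightarrow> nat \<Rightarrow> nat set" where
  "outer_side V c x = {v \<in> V. v \<le> c \<or> x \<le> v}"

locale chord =
  fixes V :: "nat set" and c x :: nat
  assumes chord_less: "c < x" and chord_mem: "c \<in> V" "x \<in> V"
begin

abbreviation "V1 \<equiv> inner_side V c x"
abbreviation "V2 \<equiv> outer_side V c x"

lemma mem_sides:
  "v \<in> V1 \<longleftrightarrow> v \<in> V \<and> c \<le> v \<and> v \<le> x"
  "v \<in> V2 \<longleftrightarrow> v \<in> V \<and> (v \<le> c \<or> x \<le> v)"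
  unfolding inner_side_def outer_side_def by simp_all

lemma sides_subset: "V1 \<subseteq> V" "V2 \<subseteq> V"
  by (auto simp: mem_sides)

lemma chord_mem_sides: "c \<in> V1" "x \<in> V1" "c \<in> V2" "x \<in> V2"
  using chord_less chord_mem by (auto simp: mem_sides)

lemma sides_inter: "V1 \<inter> V2 = {c, x}"
  using chord_less chord_mem by (auto simp: mem_sides)

lemma is_edge_sides: "is_edge V1 {c, x}" "is_edge V2 {c, x}"
  using chord_mem_sides by (auto simp: is_edge_iff[OF chord_less] mem_sides)

lemma edge_of_inner_side:
  assumes "is_edge V1 g"
  shows "is_edge V g \<or> g = {c, x}"
proof -
  obtain a b where ab: "a < b" "g = {a, b}"
    using assms unfolding is_edge_def by blast
  have ab1: "a \<in> V1" "b \<in> V1"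
    and "{y \<in> V1. a < y \<and> y < b} = {} \<or> {y \<in> V1. y < a \<or> b < y} = {}"
    using assms unfolding ab is_edge_iff[OF ab(1)] by auto
  then consider "{y \<in> V. a < y \<and> y < b} = {}" | "a = c" "b = x"
    using chord_mem_sides by (fastforce simp: mem_sides)
  then show ?thesis
    using ab1 sides_subset unfolding ab is_edge_iff[OF ab(1)] by cases auto
qed

lemma edge_of_outer_side:
  assumes "is_edge V2 g"
  shows "is_edge V g \<or> g = {c, x}"
proof -
  obtain a b where ab: "a < b" "g = {a, b}"
    using assms unfolding is_edge_def by blast
  have ab2: "a \<in> V2" "b \<in> V2"
    and "{y \<in> V2. a < y \<and> y < b} = {} \<or> {y \<in> V2. y < a \<or> b < y} = {}"
    using assms unfolding ab is_edge_iff[OF ab(1)] by auto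
  then consider
      "{y \<in> V2. a < y \<and> y < b} = {}" "\<not> (a < c \<and> c < b)" "\<not> (a < x \<and> x < b)"
    | "{y \<in> V2. y < a \<or> b < y} = {}" "a \<le> c" "x \<le> b"
    using chord_mem_sides(3,4) by (fastforce simp: not_less)
  then have "{y \<in> V. a < y \<and> y < b} = {} \<and> a \<in> V \<and> b \<in> V
      \<or> {y \<in> V. y < a \<or> b < y} = {} \<and> a \<in> V \<and> b \<in> V \<or> a = c \<and> b = x"
    using ab2 chord_less by cases (auto simp: mem_sides)
  then show ?thesis
    unfolding ab is_edge_iff[OF ab(1)] by blast
qed

lemma crosses_chord:
  assumes "c < u" "u < x" "w < c \<or> x < w"
  shows "crosses {u, w} {c, x}"
  using assms unfolding crosses_iff by auto

lemma within_side_if_not_crossing: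
  assumes "a \<in> V" "b \<in> V" "\<not> crosses {a, b} {c, x}"
  shows "{a, b} \<subseteq> V1 \<or> {a, b} \<subseteq> V2"
proof (rule ccontr)
  assume "\<not> ({a, b} \<subseteq> V1 \<or> {a, b} \<subseteq> V2)"
  then have "c < a \<and> a < x \<and> (b < c \<or> x < b) \<or> c < b \<and> b < x \<and> (a < c \<or> x < a)"
    using assms(1,2) by (auto simp: mem_sides)
  then have "crosses {a, b} {c, x}"
    using crosses_chord[of a b] crosses_chord[of b a] by (metis insert_commute)
  with assms(3) show False ..
qed

lemma diags_across:
  assumes "d \<in> diags V" "d \<notin> diags V1" "d \<notin> diags V2"
  obtains u w where "d = {u, w}" "u \<in> V" "c < u" "u < x" "w \<in> V" "w < c \<or> x < w"
proof -
  obtain a b where ab: "a < b" "a \<in> V" "b \<in> V" "d = {a, b}"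
    using assms(1) unfolding mem_diags by blast
  then have "\<not> {a, b} \<subseteq> V1" "\<not> {a, b} \<subseteq> V2"
    using assms(2,3) doubleton_mem_diags[of a b] by auto
  then have "c < a \<and> a < x \<and> (b < c \<or> x < b) \<or> c < b \<and> b < x \<and> (a < c \<or> x < a)"
    using ab by (auto simp: mem_sides)
  then show ?thesis
    using that ab by (metis insert_commute)
qed

lemma sides_not_crossing:
  assumes "d \<subseteq> V1" "d' \<subseteq> V2"
  shows "\<not> crosses d d'"
  using assms unfolding crosses_def by (auto simp: mem_sides)

lemma crossing_from_outside_less:
  assumes "W \<in> {V1, V2}" "{p, q} \<subseteq> W" "p < q" "a \<in> V" "b \<in> V - W"
    "crosses {a, b} {p, q}"
  shows "a \<in> W - {c, x} \<and> (\<forall>y \<in> {c, x} - {p, q}. crosses {a, y} {p, q})"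
proof -
  have cross: "p < a \<and> a < q \<and> (b < p \<or> q < b) \<or> p < b \<and> b < q \<and> (a < p \<or> q < a)"
    using assms(3,6) unfolding crosses_iff by auto
  have cross_iff: "crosses {a, y} {p, q} \<longleftrightarrow>
      p < a \<and> a < q \<and> (y < p \<or> q < y) \<or> p < y \<and> y < q \<and> (a < p \<or> q < a)" for y
    using assms(3) unfolding crosses_iff by auto
  from assms(1) show ?thesis
  proof
    assume W: "W = V1"
    then have "c \<le> p" "q \<le> x" "b < c \<or> x < b"
      using assms(2,5) by (auto simp: mem_sides)
    then have "p < a" "a < q"
      using cross by auto
    then show ?thesis
      using W assms(4) \<open>c \<le> p\<close> \<open>q \<le> x\<close> unfolding cross_iff by (auto simp: mem_sides)
  next
    assume "W \<in> {V2}"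
    then have W: "W = V2"
      by simp
    then have pq: "p \<le> c \<or> x \<le> p" "q \<le> c \<or> x \<le> q" and b: "c < b" "b < x"
      using assms(2,5) by (auto simp: mem_sides not_le)
    from cross consider "p < a" "a < q" "b < p" | "p < a" "a < q" "q < b" | "p < b" "b < q"
      by blast
    then show ?thesis
    proof cases
      case 1
      then have "x \<le> p"
        using pq b by linarith
      then show ?thesis
        using 1 W assms(4) b chord_less unfolding cross_iff by (auto simp: mem_sides)
    next
      case 2
      then have "q \<le> c"
        using pq b by linarith
      then show ?thesis
        using 2 W assms(4) b chord_less unfolding cross_iff by (auto simp: mem_sides)
    next
      case 3
      then have "p \<le> c" "x \<le> q" "a < p \<or> q < a"
        using pq b cross by linarith+
      then show ?thesis
        using W assms(4) chord_less unfolding cross_iff by (auto simp: mem_sides)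
    qed
  qed
qed

lemma crossing_from_outside:
  assumes "W \<in> {V1, V2}" "{p, q} \<subseteq> W" "a \<in> V" "b \<in> V - W"
    "crosses {a, b} {p, q}"
  shows "a \<in> W - {c, x} \<and> (\<forall>y \<in> {c, x} - {p, q}. crosses {a, y} {p, q})"
proof (cases "p < q")
  case True
  show ?thesis
    using crossing_from_outside_less[OF assms(1,2) True assms(3-5)] .
next
  case False
  have qp: "{q, p} = {p, q}"
    by (rule insert_commute)
  have "q < p"
    using False crosses_distinct[OF assms(5)] by auto
  then show ?thesis
    using crossing_from_outside_less[of W q p a b] assms unfolding qp by blast
qed

lemma weak_frieze_eq_across:
  assumes "weak_frieze V D f" "weak_frieze V D g" "{c, x} \<in> D"
    and agree: "\<And>d. d \<in> diags V1 \<union> diags V2 \<Longrightarrow> f d = g d"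
    and "d \<in> diags V"
  shows "f d = g d"
proof (cases "d \<in> diags V1 \<union> diags V2")
  case False
  then obtain u w where d: "d = {u, w}" "u \<in> V" "c < u" "u < x" "w \<in> V" "w < c \<or> x < w"
    using diags_across assms(5) by blast
  have "u \<in> V1" "w \<in> V2"
    using d by (auto simp: mem_sides)
  then have "{u, c} \<in> diags V1" "{u, x} \<in> diags V1" "{c, x} \<in> diags V1"
    "{w, c} \<in> diags V2" "{w, x} \<in> diags V2"
    using d chord_mem_sides chord_less doubleton_mem_diags by auto
  then have "f {u, c} = g {u, c}" "f {u, x} = g {u, x}" "f {c, x} = g {c, x}"
    "f {w, c} = g {w, c}" "f {w, x} = g {w, x}"
    using agree by auto
  moreover have "ptolemy f u w c x" "ptolemy g u w c x"
    using assms(1-3) d chord_mem crosses_chord by (auto intro: weak_frieze_ptolemy)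
  ultimately have "f {u, w} * f {c, x} = g {u, w} * f {c, x}"
    unfolding ptolemy_def by simp
  then show ?thesis
    unfolding d by (rule semifield_mult_right_cancel)
qed (use agree in blast)

end

lemma dissection_Union_subset:
  assumes "dissection V D"
  shows "\<Union>D \<subseteq> V"
  using assms diags_subset internal_diags_subset unfolding dissection_def by blast

lemma dissection_restrict:
  assumes "dissection V E"
  shows "dissection W (E \<inter> internal_diags W)"
  using assms unfolding dissection_def by blast

locale cut = chord +
  fixes E :: "nat set set"
  assumes cut_polygon: "polygon V" and cut_dissection: "dissection V E"
    and chord_diagonal: "{c, x} \<in> E"
begin

abbreviation "E1 \<equiv> E \<inter> internal_diags V1"
abbreviation "E2 \<equiv> E \<inter> internal_diags V2"

lemma chord_internal: "{c, x} \<in> internal_diags V"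
  using cut_dissection chord_diagonal unfolding dissection_def by blast

lemma chord_sides:
  obtains u w where "u \<in> V" "c < u" "u < x" "w \<in> V" "w < c \<or> x < w"
proof -
  have "\<not> is_edge V {c, x}"
    using chord_internal unfolding internal_diags_def by blast
  then have "{y \<in> V. c < y \<and> y < x} \<noteq> {}" "{y \<in> V. y < c \<or> x < y} \<noteq> {}"
    unfolding is_edge_iff[OF chord_less] using chord_mem by auto
  then show ?thesis
    using that by blast
qed

lemma polygon_sides: "polygon V1" "polygon V2"
proof -
  obtain u w where uw: "u \<in> V" "c < u" "u < x" "w \<in> V" "w < c \<or> x < w"
    using chord_sides by blast
  have "finite V"
    using cut_polygon unfolding polygon_def by blast
  then have "finite V1" "finite V2"
    using sides_subset finite_subset by blast+
  moreover have "{c, u, x} \<subseteq> V1" "{c, w, x} \<subseteq> V2"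
    using uw chord_mem_sides by (auto simp: mem_sides)
  moreover have "card {c, u, x} = 3" "card {c, w, x} = 3"
    using uw chord_less by auto
  ultimately show "polygon V1" "polygon V2"
    unfolding polygon_def by (metis card_mono)+
qed

lemma card_sides_less: "card E1 < card E" "card E2 < card E"
proof -
  have "E \<subseteq> Pow V"
    using cut_dissection diags_subset internal_diags_subset unfolding dissection_def by blast
  then have "finite E"
    using cut_polygon finite_subset unfolding polygon_def by blast
  moreover have "{c, x} \<notin> internal_diags V1" "{c, x} \<notin> internal_diags V2"
    using is_edge_sides unfolding internal_diags_def by blast+
  ultimately show "card E1 < card E" "card E2 < card E"
    using chord_diagonal by (auto intro!: psubset_card_mono)
qed

lemma dissection_sides: "dissection V1 E1" "dissection V2 E2"
  using cut_dissection by (simp_all add: dissection_restrict)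

lemma diagonals_split: "E = insert {c, x} (E1 \<union> E2)"
proof -
  have "d \<in> E1 \<union> E2" if "d \<in> E" "d \<noteq> {c, x}" for d
  proof -
    have d: "d \<in> internal_diags V"
      using that(1) cut_dissection unfolding dissection_def by blast
    then obtain a b where ab: "a < b" "a \<in> V" "b \<in> V" "d = {a, b}"
      using internal_diags_subset mem_diags by blast
    have "\<not> crosses {a, b} {c, x}"
      using that(1) ab(4) chord_diagonal cut_dissection unfolding dissection_def by blast
    then have "d \<subseteq> V1 \<or> d \<subseteq> V2"
      using ab within_side_if_not_crossing by blast
    moreover have "d \<in> diags W" if "d \<subseteq> W" for W
      using that ab doubleton_mem_diags[of a b W] by simp
    moreover have "\<not> is_edge V d"
      using d unfolding internal_diags_def by blast
    ultimately show ?thesis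
      using that edge_of_inner_side edge_of_outer_side unfolding internal_diags_def by blast
  qed
  then show ?thesis
    using chord_diagonal by blast
qed

lemma cell_within_side:
  assumes "S \<in> cells V E"
  shows "S \<subseteq> V1 \<or> S \<subseteq> V2"
proof (rule ccontr)
  assume "\<not> (S \<subseteq> V1 \<or> S \<subseteq> V2)"
  moreover have "S \<subseteq> V"
    using assms unfolding cells_def subpolygon_def by blast
  moreover obtain u w where "u \<in> S" "u \<notin> V2" "w \<in> S" "w \<notin> V1"
    using calculation(1) by blast
  ultimately have "u \<in> S" "c < u" "u < x" "w \<in> S" "w < c \<or> x < w"
    by (auto simp: mem_sides)
  then show False
    using cell_not_across_diagonal[OF cut_polygon cut_dissection assms chord_diagonal chord_less]
    by blast
qed

lemma cells_sides: "cells V1 E1 \<subseteq> cells V E" "cells V2 E2 \<subseteq> cells V E"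
  using cells_restrict_subset sides_subset chord_diagonal edge_of_inner_side edge_of_outer_side
  by metis+

lemma cells_split: "cells V E = cells V1 E1 \<union> cells V2 E2"
  using cells_sides cells_restrict[OF sides_subset(1)] cells_restrict[OF sides_subset(2)]
    cell_within_side by blast

lemma cells_of_different_sides:
  assumes "S \<in> cells V1 E1" "S' \<in> cells V2 E2"
    and d: "d \<in> internal_diags S" and d': "d' \<in> internal_diags S'"
  shows "d \<noteq> d' \<and> \<not> crosses d d'"
proof -
  have "S \<subseteq> V1" "S' \<subseteq> V2"
    using assms(1,2) unfolding cells_def subpolygon_def by blast+
  moreover have "d \<subseteq> S" "d' \<subseteq> S'"
    using d d' unfolding internal_diags_def diags_def by auto
  ultimately have "d \<subseteq> V1" "d' \<subseteq> V2"
    by auto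
  moreover from this have "\<not> crosses d d'"
    by (rule sides_not_crossing)
  moreover have "d \<noteq> {c, x}"
    using d \<open>d \<subseteq> S\<close> \<open>S \<subseteq> V1\<close> is_edge_subpolygon[OF _ is_edge_sides(1)]
    unfolding internal_diags_def by blast
  moreover obtain a b where "a < b" "d = {a, b}"
    using d internal_diags_subset mem_diags by blast
  moreover have "{a, b} \<subseteq> {c, x} \<Longrightarrow> {a, b} = {c, x}"
    using \<open>a < b\<close> chord_less by (metis insert_subset less_asym singletonD insertE)
  ultimately show ?thesis
    using sides_inter by auto
qed

lemma edge_within_side:
  assumes "is_edge V g"
  shows "g \<subseteq> V1 \<or> g \<subseteq> V2"
proof -
  obtain a b where "g = {a, b}" "a \<in> V" "b \<in> V"
    using assms unfolding is_edge_def by blast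
  then show ?thesis
    using edge_not_crosses[OF assms chord_mem] within_side_if_not_crossing by blast
qed

end

lemma dissection_induct [consumes 2, case_names no_diagonal cut]:
  assumes "polygon V" "dissection V E"
    and no_diagonal: "\<And>V. polygon V \<Longrightarrow> P V {}"
    and step: "\<And>V E c x. cut V c x E
      \<Longrightarrow> P (inner_side V c x) (E \<inter> internal_diags (inner_side V c x))
      \<Longrightarrow> P (outer_side V c x) (E \<inter> internal_diags (outer_side V c x)) \<Longrightarrow> P V E"
  shows "P V E"
  using assms(1,2)
proof (induction "card E" arbitrary: V E rule: less_induct)
  case less
  show ?case
  proof (cases "E = {}")
    case True
    then show ?thesis
      using no_diagonal less.prems by simp
  next
    case False
    then obtain d where "d \<in> E"
      by blast
    then have "d \<in> diags V"
      using less.prems(2) internal_diags_subset unfolding dissection_def by blast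
    then obtain c x where "c < x" "c \<in> V" "x \<in> V" "d = {c, x}"
      unfolding mem_diags by blast
    with \<open>d \<in> E\<close> have "cut V c x E"
      using less.prems by unfold_locales simp_all
    then interpret cut V c x E .
    show ?thesis
      using less.hyps card_sides_less polygon_sides dissection_sides
      by (intro step[OF \<open>cut V c x E\<close>]) blast+
  qed
qed

lemma cells_disjoint:
  assumes "polygon V" "dissection V E" "S \<in> cells V E" "S' \<in> cells V E" "S \<noteq> S'"
    "d \<in> internal_diags S" "d' \<in> internal_diags S'"
  shows "d \<noteq> d' \<and> \<not> crosses d d'"
  using assms
proof (induction V E arbitrary: S S' d d' rule: dissection_induct)
  case (no_diagonal V)
  then have "S = V" "S' = V"
    using cells_no_diagonal by blast+
  then show ?case
    using \<open>S \<noteq> S'\<close> by blast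
next
  case (cut V E c x)
  interpret cut V c x E
    by fact
  have "S \<in> cells V1 E1 \<union> cells V2 E2" "S' \<in> cells V1 E1 \<union> cells V2 E2"
    using cut(4,5) unfolding cells_split .
  then consider "S \<in> cells V1 E1" "S' \<in> cells V1 E1" | "S \<in> cells V2 E2" "S' \<in> cells V2 E2"
    | "S \<in> cells V1 E1" "S' \<in> cells V2 E2" | "S \<in> cells V2 E2" "S' \<in> cells V1 E1"
    by blast
  then show ?case
  proof cases
    case 1
    then show ?thesis
      using cut(2) cut(6-8) by blast
  next
    case 2
    then show ?thesis
      using cut(3) cut(6-8) by blast
  next
    case 3
    then show ?thesis
      using cells_of_different_sides cut(7,8) by blast
  next
    case 4
    then show ?thesis
      using cells_of_different_sides[OF 4(2,1) cut(8,7)] crosses_sym by blast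
  qed
qed

lemma edge_in_cell:
  assumes "polygon V" "dissection V E" "is_edge V g"
  shows "\<exists>S\<in>cells V E. g \<in> diags S"
  using assms
proof (induction V E rule: dissection_induct)
  case (no_diagonal V)
  then show ?case
    using cells_no_diagonal is_edge_diags by simp
next
  case (cut V E c x)
  interpret cut V c x E
    by fact
  have "is_edge V1 g \<or> is_edge V2 g"
    using edge_within_side[OF cut(4)] is_edge_subpolygon[OF _ cut(4)] sides_subset by blast
  then have "\<exists>S \<in> cells V1 E1 \<union> cells V2 E2. g \<in> diags S"
    using cut(2,3) by blast
  then show ?case
    unfolding cells_split .
qed

lemma cell_diagonal_not_crossing:
  assumes "polygon V" "dissection V E" "S \<in> cells V E" "e \<in> E" "d \<in> internal_diags S"
  shows "\<not> crosses d e"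
proof
  assume "crosses d e"
  have "e \<in> diags V"
    using assms(2,4) internal_diags_subset unfolding dissection_def by blast
  then obtain c x where cx: "c < x" "e = {c, x}"
    unfolding mem_diags by blast
  have "d \<in> diags S"
    using assms(5) internal_diags_subset by blast
  then obtain a b where ab: "d = {a, b}" "a \<in> S" "b \<in> S"
    unfolding mem_diags by blast
  have "crosses {a, b} {c, x}"
    using \<open>crosses d e\<close> ab cx by simp
  then have "c < a \<and> a < x \<and> (b < c \<or> x < b) \<or> c < b \<and> b < x \<and> (a < c \<or> x < a)"
    using cx(1) unfolding crosses_iff by auto
  then show False
    using cell_not_across_diagonal[OF assms(1-3) _ cx(1)] assms(4) ab cx(2) by blast
qed

lemma dissection_refine:
  assumes "polygon V" "dissection V E" "\<forall>S\<in>cells V E. dissection S (Ds S)"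
  shows "dissection V (E \<union> (\<Union>S\<in>cells V E. Ds S))"
proof -
  have Ds: "Ds S \<subseteq> internal_diags S" "\<And>d e. d \<in> Ds S \<Longrightarrow> e \<in> Ds S \<Longrightarrow> \<not> crosses d e"
    if "S \<in> cells V E" for S
    using that assms(3) unfolding dissection_def by blast+
  have "Ds S \<subseteq> internal_diags V" if "S \<in> cells V E" for S
    using Ds(1)[OF that] internal_diags_mono[of S V] that
    unfolding cells_def subpolygon_def by blast
  then have "E \<union> (\<Union>S\<in>cells V E. Ds S) \<subseteq> internal_diags V"
    using assms(2) unfolding dissection_def by blast
  moreover have "\<not> crosses d e"
    if "d \<in> E \<union> (\<Union>S\<in>cells V E. Ds S)" "e \<in> E \<union> (\<Union>S\<in>cells V E. Ds S)" for d e
  proof -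
    have cell_vs_E: "\<not> crosses d' e'" if "S \<in> cells V E" "d' \<in> Ds S" "e' \<in> E" for S d' e'
      using cell_diagonal_not_crossing[OF assms(1,2) that(1,3)] Ds(1)[OF that(1)] that(2) by blast
    from that consider "d \<in> E" "e \<in> E" | S where "S \<in> cells V E" "d \<in> Ds S" "e \<in> E"
      | S where "S \<in> cells V E" "e \<in> Ds S" "d \<in> E"
      | S S' where "S \<in> cells V E" "S' \<in> cells V E" "d \<in> Ds S" "e \<in> Ds S'"
      by blast
    then show ?thesis
    proof cases
      case 1
      then show ?thesis
        using assms(2) unfolding dissection_def by blast
    next
      case 2
      then show ?thesis
        by (rule cell_vs_E)
    next
      case 3
      then show ?thesis
        using cell_vs_E crosses_sym by blast
    next
      case (4 S S')
      then show ?thesis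
        using Ds(2) cells_disjoint[OF assms(1,2) 4(1,2)] Ds(1) by (cases "S = S'") blast+
    qed
  qed
  ultimately show ?thesis
    unfolding dissection_def by blast
qed

locale glue = chord +
  fixes D1 D2 :: "nat set set" and f1 f2 :: "nat set \<Rightarrow> 'k::semifield"
  assumes inner_diagonals: "\<Union>D1 \<subseteq> V1" and outer_diagonals: "\<Union>D2 \<subseteq> V2"
    and inner_frieze: "weak_frieze V1 D1 f1" and outer_frieze: "weak_frieze V2 D2 f2"
    and agree_on_chord: "f1 {c, x} = f2 {c, x}"
begin

(* On a diagonal d crossing {c, x}: the exchange relation for this crossing, solved for glued d.
   Outside diags V the value is junk. *)
definition glued :: "nat set \<Rightarrow> 'k" where
  "glued d = (if d \<in> diags V1 then f1 d else if d \<in> diags V2 then f2 d else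
     (let u = THE u. u \<in> d \<and> c < u \<and> u < x; w = THE w. w \<in> d \<and> (w < c \<or> x < w) in
      (f1 {u, c} * f2 {w, x} + f1 {u, x} * f2 {w, c}) * inverse (f1 {c, x})))"

lemma glued_inner: "d \<in> diags V1 \<Longrightarrow> glued d = f1 d"
  unfolding glued_def by simp

lemma glued_outer:
  assumes "d \<in> diags V2"
  shows "glued d = f2 d"
proof (cases "d \<in> diags V1")
  case True
  then have "d \<subseteq> {c, x}"
    using assms diags_subset sides_inter by blast
  moreover obtain a b where "a < b" "d = {a, b}"
    using assms unfolding mem_diags by blast
  ultimately have "d = {c, x}"
    using chord_less by (metis insert_subset less_asym singletonD insertE)
  then show ?thesis
    using True agree_on_chord unfolding glued_def by simp
qed (use assms in \<open>simp add: glued_def\<close>)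

lemma ptolemy_glued_across:
  assumes u: "u \<in> V" "c < u" "u < x" and w: "w \<in> V" "w < c \<or> x < w"
  shows "ptolemy glued u w c x"
proof -
  have "{u, w} \<notin> diags V1" "{u, w} \<notin> diags V2"
    using u w diags_subset by (fastforce simp: mem_sides)+
  moreover have "(THE u'. u' \<in> {u, w} \<and> c < u' \<and> u' < x) = u"
    "(THE w'. w' \<in> {u, w} \<and> (w' < c \<or> x < w')) = w"
    using u w by (auto intro!: the_equality)
  ultimately have "glued {u, w}
      = (f1 {u, c} * f2 {w, x} + f1 {u, x} * f2 {w, c}) * inverse (f1 {c, x})"
    unfolding glued_def by simp
  moreover have "u \<in> V1" "w \<in> V2"
    using u w by (auto simp: mem_sides)
  then have "glued {c, x} = f1 {c, x}" "glued {u, c} = f1 {u, c}" "glued {u, x} = f1 {u, x}"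
    "glued {w, c} = f2 {w, c}" "glued {w, x} = f2 {w, x}"
    using u w chord_less chord_mem_sides glued_inner glued_outer doubleton_mem_diags by auto
  ultimately show ?thesis
    unfolding ptolemy_def using semifield_left_inverse[of "f1 {c, x}"]
    by (simp add: mult.assoc)
qed

lemma weak_frieze_glued_sides: "weak_frieze V1 D1 glued" "weak_frieze V2 D2 glued"
  using weak_frieze_cong[OF inner_frieze glued_inner] weak_frieze_cong[OF outer_frieze glued_outer]
  by blast+

lemma ptolemy_glued_side:
  assumes side: "(W, D) \<in> {(V1, D1), (V2, D2)}"
    and V: "a \<in> V" "b \<in> V" "p \<in> V" "q \<in> V"
    and cross: "crosses {a, b} {p, q}" and pq: "{p, q} \<in> insert {c, x} D"
  shows "ptolemy glued a b p q"
proof -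
  have W: "W \<in> {V1, V2}" "\<Union>D \<subseteq> W" "weak_frieze W D glued" "is_edge W {c, x}"
    using side inner_diagonals outer_diagonals weak_frieze_glued_sides is_edge_sides by auto
  have across: "ptolemy glued u w c x" if "u \<in> W - {c, x}" "w \<in> V - W" for u w
    using side
  proof
    assume "(W, D) = (V1, D1)"
    then show ?thesis
      using that ptolemy_glued_across by (auto simp: mem_sides)
  next
    assume "(W, D) \<in> {(V2, D2)}"
    then have "ptolemy glued w u c x"
      using that ptolemy_glued_across by (auto simp: mem_sides)
    then show ?thesis
      using ptolemy_commute_left[of glued u w c x] by simp
  qed
  have cx: "c \<in> W" "x \<in> W"
    using W(1) chord_mem_sides by auto
  have "{p, q} \<subseteq> W"
    using pq W(2) cx by auto
  have from_outside: "ptolemy glued a' b' p q"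
    if "a' \<in> V" "b' \<in> V - W" "crosses {a', b'} {p, q}" for a' b'
  proof -
    have a': "a' \<in> W - {c, x}" and beside: "\<forall>y\<in>{c, x} - {p, q}. crosses {a', y} {p, q}"
      using crossing_from_outside[OF W(1) \<open>{p, q} \<subseteq> W\<close> that] by blast+
    show ?thesis
    proof (cases "{p, q} = {c, x}")
      case True
      then show ?thesis
        using across[OF a' that(2)] ptolemy_doubleton_cong[of p q c x glued a' b'] by simp
    next
      case False
      then have "{p, q} \<in> D"
        using pq by blast
      show ?thesis
      proof (rule ptolemy_transfer)
        show "c \<noteq> x" "p \<noteq> q" "{p, q} \<noteq> {c, x}" "a' \<notin> {c, x}"
          using chord_less crosses_distinct[OF that(3)] False a' by auto
        show "ptolemy glued y b' c x" if "y \<in> {a', p, q} - {c, x}" for y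
          using that a' \<open>{p, q} \<subseteq> W\<close> across[of y b'] \<open>b' \<in> V - W\<close> by auto
        show "ptolemy glued a' y p q" if "y \<in> {c, x} - {p, q}" for y
          using that a' beside \<open>{p, q} \<subseteq> W\<close> \<open>{p, q} \<in> D\<close> cx
          by (intro weak_frieze_ptolemy[OF W(3)]) auto
      qed
    qed
  qed
  consider "a \<in> W" "b \<in> W" | "b \<notin> W" | "a \<notin> W"
    by blast
  then show ?thesis
  proof cases
    case 1
    have "{p, q} \<noteq> {c, x}"
      using edge_not_crosses[OF W(4) 1] crosses_sym[OF cross] by auto
    then show ?thesis
      using 1 \<open>{p, q} \<subseteq> W\<close> pq cross weak_frieze_ptolemy[OF W(3)] by auto
  next
    case 2
    then show ?thesis
      using from_outside V cross by blast
  next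
    case 3
    then have "ptolemy glued b a p q"
      using from_outside V cross by (simp add: insert_commute)
    then show ?thesis
      by (simp add: ptolemy_commute_left)
  qed
qed

lemma weak_frieze_glued: "weak_frieze V (insert {c, x} (D1 \<union> D2)) glued"
  unfolding weak_frieze_def
proof (intro allI impI)
  fix a b p q
  assume h: "a \<in> V" "b \<in> V" "p \<in> V" "q \<in> V" "crosses {a, b} {p, q}"
    "{p, q} \<in> insert {c, x} (D1 \<union> D2)"
  then have "{p, q} \<in> insert {c, x} D1 \<or> {p, q} \<in> insert {c, x} D2"
    by blast
  then have "ptolemy glued a b p q"
    using ptolemy_glued_side[of V1 D1] ptolemy_glued_side[of V2 D2] h(1-5) by blast
  then show
    "glued {a, b} * glued {p, q} = glued {a, p} * glued {b, q} + glued {a, q} * glued {b, p}"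
    unfolding ptolemy_def .
qed

end

lemma weak_frieze_unique:
  assumes "polygon V" "dissection V E" "weak_frieze V E f" "weak_frieze V E g"
    "\<forall>S\<in>cells V E. \<forall>d\<in>diags S. f d = g d"
  shows "\<forall>d\<in>diags V. f d = g d"
  using assms
proof (induction V E rule: dissection_induct)
  case (no_diagonal V)
  then show ?case
    using cells_no_diagonal by simp
next
  case (cut V E c x)
  interpret cut V c x E
    by fact
  have "\<forall>d\<in>diags V1. f d = g d"
    using cut(2) cut(6) cells_sides(1)
      weak_frieze_mono[OF cut(4) sides_subset(1)] weak_frieze_mono[OF cut(5) sides_subset(1)]
    by blast
  moreover have "\<forall>d\<in>diags V2. f d = g d"
    using cut(3) cut(6) cells_sides(2)
      weak_frieze_mono[OF cut(4) sides_subset(2)] weak_frieze_mono[OF cut(5) sides_subset(2)]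
    by blast
  ultimately show ?case
    using weak_frieze_eq_across[OF cut(4,5) chord_diagonal] by blast
qed

lemma weak_frieze_exists:
  assumes "polygon V" "dissection V E"
    and "\<forall>S\<in>cells V E. dissection S (Ds S)"
    and "\<forall>S\<in>cells V E. weak_frieze S (Ds S) (fs S)"
    and "\<forall>S\<in>cells V E. \<forall>S'\<in>cells V E. \<forall>d\<in>diags S \<inter> diags S'. fs S d = fs S' d"
  shows "\<exists>f. weak_frieze V (E \<union> (\<Union>S\<in>cells V E. Ds S)) f \<and> (\<forall>S\<in>cells V E. \<forall>d\<in>diags S. f d = fs S d)"
  using assms
proof (induction V E rule: dissection_induct)
  case (no_diagonal V)
  then have cells: "cells V {} = {V}"
    using cells_no_diagonal by blast
  then have "weak_frieze V (Ds V) (fs V)"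
    using no_diagonal.prems(2) by simp
  then show ?case
    unfolding cells by (intro exI[of _ "fs V"]) simp
next
  case (cut V E c x)
  interpret cut V c x E
    by fact
  define D1 where "D1 = E1 \<union> (\<Union>S\<in>cells V1 E1. Ds S)"
  define D2 where "D2 = E2 \<union> (\<Union>S\<in>cells V2 E2. Ds S)"
  have "\<exists>f1. weak_frieze V1 D1 f1 \<and> (\<forall>S\<in>cells V1 E1. \<forall>d\<in>diags S. f1 d = fs S d)"
    unfolding D1_def by (rule cut(2)) (use cut(4-6) cells_sides(1) in blast)+
  then obtain f1 where f1: "weak_frieze V1 D1 f1" "\<forall>S\<in>cells V1 E1. \<forall>d\<in>diags S. f1 d = fs S d"
    by blast
  have "\<exists>f2. weak_frieze V2 D2 f2 \<and> (\<forall>S\<in>cells V2 E2. \<forall>d\<in>diags S. f2 d = fs S d)"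
    unfolding D2_def by (rule cut(3)) (use cut(4-6) cells_sides(2) in blast)+
  then obtain f2 where f2: "weak_frieze V2 D2 f2" "\<forall>S\<in>cells V2 E2. \<forall>d\<in>diags S. f2 d = fs S d"
    by blast
  have "f1 {c, x} = f2 {c, x}"
  proof -
    obtain S1 where S1: "S1 \<in> cells V1 E1" "{c, x} \<in> diags S1"
      using edge_in_cell[OF polygon_sides(1) dissection_sides(1) is_edge_sides(1)] by blast
    obtain S2 where S2: "S2 \<in> cells V2 E2" "{c, x} \<in> diags S2"
      using edge_in_cell[OF polygon_sides(2) dissection_sides(2) is_edge_sides(2)] by blast
    have "fs S1 {c, x} = fs S2 {c, x}"
      using cut(6) S1 S2 cells_sides by blast
    then show ?thesis
      using f1(2) f2(2) S1 S2 by simp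
  qed
  moreover have "dissection V1 D1" "dissection V2 D2"
    unfolding D1_def D2_def using cut(4) cells_sides
    by (intro dissection_refine polygon_sides dissection_sides; blast)+
  then have "\<Union>D1 \<subseteq> V1" "\<Union>D2 \<subseteq> V2"
    by (simp_all add: dissection_Union_subset)
  ultimately interpret glue V c x D1 D2 f1 f2
    using f1(1) f2(1) by unfold_locales
  have "E \<union> (\<Union>S\<in>cells V E. Ds S) = insert {c, x} (E1 \<union> E2) \<union> (\<Union>S\<in>cells V1 E1 \<union> cells V2 E2. Ds S)"
    by (simp only: flip: diagonals_split cells_split)
  then have diagonals: "E \<union> (\<Union>S\<in>cells V E. Ds S) = insert {c, x} (D1 \<union> D2)"
    unfolding D1_def D2_def by auto
  have "glued d = fs S d" if "S \<in> cells V E" "d \<in> diags S" for S d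
  proof -
    have "S \<in> cells V1 E1 \<or> S \<in> cells V2 E2"
      using that(1) unfolding cells_split by blast
    moreover have "S \<in> cells W F \<Longrightarrow> d \<in> diags W" for W F
      using that(2) diags_mono unfolding cells_def subpolygon_def by blast
    ultimately show ?thesis
      using f1(2) f2(2) glued_inner glued_outer that(2) by auto
  qed
  then show ?case
    using weak_frieze_glued unfolding diagonals by blast
qed

lemma weak_frieze_ex1:
  assumes "polygon V" "dissection V E"
    and "\<forall>S\<in>cells V E. dissection S (Ds S)"
    and "\<forall>S\<in>cells V E. weak_frieze S (Ds S) (fs S)"
    and "\<forall>S\<in>cells V E. \<forall>S'\<in>cells V E. \<forall>d\<in>diags S \<inter> diags S'. fs S d = fs S' d"
  defines "D \<equiv> E \<union> (\<Union>S\<in>cells V E. Ds S)"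
  shows "\<exists>!f. f \<in> extensional (diags V) \<and> weak_frieze V D f
    \<and> (\<forall>S\<in>cells V E. \<forall>d\<in>diags S. f d = fs S d)"
proof -
  obtain f where f: "weak_frieze V D f" "\<forall>S\<in>cells V E. \<forall>d\<in>diags S. f d = fs S d"
    using weak_frieze_exists[OF assms(1-5)] unfolding D_def by blast
  have cell_diags: "diags S \<subseteq> diags V" if "S \<in> cells V E" for S
    using that diags_mono unfolding cells_def subpolygon_def by blast
  show ?thesis
  proof (rule ex1I[of _ "restrict f (diags V)"])
    show "restrict f (diags V) \<in> extensional (diags V) \<and> weak_frieze V D (restrict f (diags V))
        \<and> (\<forall>S\<in>cells V E. \<forall>d\<in>diags S. restrict f (diags V) d = fs S d)"
    proof (intro conjI ballI)
      show "restrict f (diags V) \<in> extensional (diags V)"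
        by simp
      show "weak_frieze V D (restrict f (diags V))"
        using weak_frieze_cong[OF f(1)] by simp
      fix S d
      assume "S \<in> cells V E" "d \<in> diags S"
      then show "restrict f (diags V) d = fs S d"
        using f(2) cell_diags by auto
    qed
  next
    fix g
    assume g: "g \<in> extensional (diags V) \<and> weak_frieze V D g
      \<and> (\<forall>S\<in>cells V E. \<forall>d\<in>diags S. g d = fs S d)"
    have "E \<subseteq> D"
      unfolding D_def by blast
    then have "weak_frieze V E g" "weak_frieze V E f"
      using g f(1) weak_frieze_mono[OF _ order_refl] by blast+
    moreover have "\<forall>S\<in>cells V E. \<forall>d\<in>diags S. g d = f d"
      using g f(2) by simp
    ultimately have "\<forall>d\<in>diags V. g d = f d"
      by (rule weak_frieze_unique[OF assms(1,2)])
    then show "g = restrict f (diags V)"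
      using g by (intro extensionalityI[of _ "diags V"]) simp_all
  qed
qed

theorem theoremB:
  fixes V :: "nat set" and E :: "nat set set"
    and Ds :: "nat set \<Rightarrow> nat set set"
    and fs :: "nat set \<Rightarrow> nat set \<Rightarrow> 'k::semifield"
  assumes "polygon V"
    and "dissection V E"
    and "\<forall>S\<in>cells V E. dissection S (Ds S)"
  shows "dissection V (E \<union> (\<Union>S\<in>cells V E. Ds S))
     \<and> (\<forall>S\<in>cells V E. E \<inter> Ds S = {})
     \<and> (\<forall>S\<in>cells V E. \<forall>S'\<in>cells V E. S \<noteq> S' \<longrightarrow> Ds S \<inter> Ds S' = {})
     \<and> ((\<forall>S\<in>cells V E. weak_frieze S (Ds S) (fs S))
        \<longrightarrow> (\<forall>S\<in>cells V E. \<forall>S'\<in>cells V E. \<forall>d\<in>diags S \<inter> diags S'. fs S d = fs S' d)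
        \<longrightarrow> (\<exists>!f. f \<in> extensional (diags V)
                 \<and> weak_frieze V (E \<union> (\<Union>S\<in>cells V E. Ds S)) f
                 \<and> (\<forall>S\<in>cells V E. \<forall>d\<in>diags S. f d = fs S d)))"
proof (intro conjI impI)
  have Ds: "Ds S \<subseteq> internal_diags S" if "S \<in> cells V E" for S
    using that assms(3) unfolding dissection_def by blast
  show "dissection V (E \<union> (\<Union>S\<in>cells V E. Ds S))"
    using dissection_refine[OF assms] .
  show "\<forall>S\<in>cells V E. E \<inter> Ds S = {}"
    using Ds unfolding cells_def by blast
  show "\<forall>S\<in>cells V E. \<forall>S'\<in>cells V E. S \<noteq> S' \<longrightarrow> Ds S \<inter> Ds S' = {}"
    using Ds cells_disjoint[OF assms(1,2)] by blast
next
  assume "\<forall>S\<in>cells V E. weak_frieze S (Ds S) (fs S)"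
    and "\<forall>S\<in>cells V E. \<forall>S'\<in>cells V E. \<forall>d\<in>diags S \<inter> diags S'. fs S d = fs S' d"
  then show "\<exists>!f. f \<in> extensional (diags V)
                 \<and> weak_frieze V (E \<union> (\<Union>S\<in>cells V E. Ds S)) f
                 \<and> (\<forall>S\<in>cells V E. \<forall>d\<in>diags S. f d = fs S d)"
    by (rule weak_frieze_ex1[OF assms])
qed

end
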